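(* Let $X$ be a finite nonempty set partitioned into nonempty classes $(C_j)_{j\in J}$, choose $r_j\in C_j$ for each $j$, and set $R=\{r_j:j\in J\}$, $I=X\setminus R$, $\mathcal A=\mathcal P(X)$. Choose weights $w_j\in\{0,1\}$ with $\sum_j w_j>0$ and define $\mu(B)=\sum_{j\in J:\,r_j\in B}w_j$ for $B\subseteq X$. Define $\Pi_R:X\to R$ by $\Pi_R(x)=r_j$ for $x\in C_j$, $G=\bigcup_{j\in J}(C_j\times C_j)$, $E_0=\mu(X)$, $\eta=0$, and let $\mu^{\otimes2}(S)=\sum_{(x,y)\in S}m(x)m(y)$ for $S\subseteq X\times X$, where $m(x)=\mu(\{x\})$. Then $(X,\mathcal A,\mu,\mu^{\otimes2},R,I,\Pi_R,G,E_0,\eta)$ is an admissible structural model. In particular, there exist finite admissible structural models in which $G$ is not contained in the diagonal (namely whenever some $C_j$ has more than one element).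
   Context: For relations, $H\circ K=\{(x,z):\exists y\,(x,y)\in H,(y,z)\in K\}$. An admissible structural model is a tuple $(X,\mathcal A,\mu,\mu^{\otimes2},R,I,\Pi_R,G,E_0,\eta)$ with $X$ nonempty, $\mathcal A$ an algebra on $X$, $\mu:\mathcal A\to[0,\infty)$ finitely additive, $\mu^{\otimes2}$ finitely additive on the product algebra with $\mu^{\otimes2}(B_1\times B_2)=\mu(B_1)\mu(B_2)$, $R,I\in\mathcal A$ disjoint, $\Pi_R:X\to R$, $G$ in the product algebra, $E_0>0$, $\eta\in[0,1]$, satisfying: Axiom I: $\Pi_R\circ\Pi_R=\Pi_R$, $\Pi_R|_R=\mathrm{id}_R$, $\Pi_R^{-1}(B)\in\mathcal A$ for measurable $B\subseteq R$; Axiom II: $G$ reflexive, symmetric, $G\circ G=G$; Axiom III: $\mu(R)+\mu(I)=E_0$, $\mu(\Pi_R^{-1}(B))=\mu(B)$ for measurable $B\subseteq R$, and for all $B\in\mathcal A$, $\mu^{\otimes2}((B\times X)\cap G)=\mu(B)+\eta\,\mu^{\otimes2}((\Pi_R^{-1}(B)\times X)\cap G)$. *)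

theory Defs
  imports "HOL-Analysis.Sigma_Algebra"
begin

definition fin_add_nonneg :: "'a set set \<Rightarrow> ('a set \<Rightarrow> real) \<Rightarrow> bool" where
  "fin_add_nonneg M f \<longleftrightarrow>
     f {} = 0 \<and> (\<forall>B\<in>M. 0 \<le> f B) \<and>
     (\<forall>A\<in>M. \<forall>B\<in>M. A \<inter> B = {} \<longrightarrow> f (A \<union> B) = f A + f B)"

definition prod_algebra :: "'a set \<Rightarrow> 'a set set \<Rightarrow> ('a \<times> 'a) set set" where
  "prod_algebra X A =
     \<Inter>{M. algebra (X \<times> X) M \<and> {B1 \<times> B2 | B1 B2. B1 \<in> A \<and> B2 \<in> A} \<subseteq> M}"

definition admissible_structural_model ::
  "'a set \<Rightarrow> 'a set set \<Rightarrow> ('a set \<Rightarrow> real) \<Rightarrow> (('a \<times> 'a) set \<Rightarrow> real) \<Rightarrow>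
   'a set \<Rightarrow> 'a set \<Rightarrow> ('a \<Rightarrow> 'a) \<Rightarrow> ('a \<times> 'a) set \<Rightarrow> real \<Rightarrow> real \<Rightarrow> bool" where
  "admissible_structural_model X A \<mu> \<mu>2 R I PiR G E0 \<eta> \<longleftrightarrow>
     X \<noteq> {} \<and> algebra X A \<and>
     fin_add_nonneg A \<mu> \<and>
     fin_add_nonneg (prod_algebra X A) \<mu>2 \<and>
     (\<forall>B1\<in>A. \<forall>B2\<in>A. \<mu>2 (B1 \<times> B2) = \<mu> B1 * \<mu> B2) \<and>
     R \<in> A \<and> I \<in> A \<and> R \<inter> I = {} \<and>
     (\<forall>x\<in>X. PiR x \<in> R) \<and>
     G \<in> prod_algebra X A \<and>
     E0 > 0 \<and> 0 \<le> \<eta> \<and> \<eta> \<le> 1 \<and>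
     (\<forall>x\<in>X. PiR (PiR x) = PiR x) \<and>
     (\<forall>x\<in>R. PiR x = x) \<and>
     (\<forall>B\<in>A. B \<subseteq> R \<longrightarrow> {x\<in>X. PiR x \<in> B} \<in> A) \<and>
     refl_on X G \<and> sym G \<and> G O G = G \<and>
     \<mu> R + \<mu> I = E0 \<and>
     (\<forall>B\<in>A. B \<subseteq> R \<longrightarrow> \<mu> {x\<in>X. PiR x \<in> B} = \<mu> B) \<and>
     (\<forall>B\<in>A. \<mu>2 ((B \<times> X) \<inter> G) =
                \<mu> B + \<eta> * \<mu>2 (({x\<in>X. PiR x \<in> B} \<times> X) \<inter> G))"

end

theory Submission
  imports Defs
begin

text \<open>The measure \<open>\<mu>\<close> is a sum of Dirac masses \<open>w\<^sub>j \<in> {0, 1}\<close> at the representatives, so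
  \<open>\<mu>{x}\<^sup>2 = \<mu>{x}\<close> for every point. Two distinct \<open>G\<close>-related points lie in one class, which
  has only one representative, so their product mass vanishes. Hence \<open>\<mu>\<^sup>\<otimes>\<^sup>2((B \<times> X) \<inter> G)\<close>
  only sees the diagonal of \<open>B\<close> and equals \<open>\<mu>(B)\<close>, which is Axiom III with \<open>\<eta> = 0\<close>.\<close>

definition dirac_sum :: "'j set \<Rightarrow> ('j \<Rightarrow> 'a) \<Rightarrow> ('j \<Rightarrow> real) \<Rightarrow> 'a set \<Rightarrow> real" where
  "dirac_sum J r w B = (\<Sum>j\<in>{j\<in>J. r j \<in> B}. w j)"

definition atomic_product :: "('a set \<Rightarrow> real) \<Rightarrow> ('a \<times> 'a) set \<Rightarrow> real" where
  "atomic_product \<mu> S = (\<Sum>(x, y)\<in>S. \<mu> {x} * \<mu> {y})"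

lemma prod_algebra_subset_Pow:
  assumes "A \<subseteq> Pow X"
  shows "prod_algebra X A \<subseteq> Pow (X \<times> X)"
proof -
  have "Pow (X \<times> X) \<in> {M. algebra (X \<times> X) M \<and> {B1 \<times> B2 |B1 B2. B1 \<in> A \<and> B2 \<in> A} \<subseteq> M}"
    using assms by (auto simp: algebra_Pow)
  then show ?thesis unfolding prod_algebra_def by (rule Inter_lower)
qed

lemma finite_subset_in_prod_algebra:
  assumes "finite S" and "S \<subseteq> X \<times> X"
  shows "S \<in> prod_algebra X (Pow X)"
  unfolding prod_algebra_def
proof (rule InterI, safe)
  fix M assume "algebra (X \<times> X) M"
    and rectangles: "{B1 \<times> B2 |B1 B2. B1 \<in> Pow X \<and> B2 \<in> Pow X} \<subseteq> M"
  then interpret algebra "X \<times> X" M by simp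
  have "{a} \<times> {b} \<in> M" if "(a, b) \<in> S" for a b
    using that assms(2) rectangles by blast
  moreover have "S = (\<Union>(a, b)\<in>S. {a} \<times> {b})" by auto
  ultimately have "\<dots> \<in> M" using \<open>finite S\<close> by (intro finite_UN) auto
  then show "S \<in> M" by simp
qed

lemma prod_algebra_Pow_finite:
  assumes "finite X"
  shows "prod_algebra X (Pow X) = Pow (X \<times> X)"
proof
  show "prod_algebra X (Pow X) \<subseteq> Pow (X \<times> X)" by (rule prod_algebra_subset_Pow) simp
  show "Pow (X \<times> X) \<subseteq> prod_algebra X (Pow X)"
    using assms by (auto intro: finite_subset_in_prod_algebra finite_subset)
qed

lemma fin_add_nonneg_dirac_sum:
  fixes r :: "'j \<Rightarrow> 'a"
  assumes "finite J" and "\<And>j. j \<in> J \<Longrightarrow> 0 \<le> w j"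
  shows "fin_add_nonneg M (dirac_sum J r w)"
  unfolding fin_add_nonneg_def dirac_sum_def
proof (intro conjI ballI impI)
  fix A B :: "'a set" assume "A \<inter> B = {}"
  then have "{j\<in>J. r j \<in> A \<union> B} = {j\<in>J. r j \<in> A} \<union> {j\<in>J. r j \<in> B}"
    and "{j\<in>J. r j \<in> A} \<inter> {j\<in>J. r j \<in> B} = {}" by auto
  then show "(\<Sum>j\<in>{j\<in>J. r j \<in> A \<union> B}. w j) = (\<Sum>j\<in>{j\<in>J. r j \<in> A}. w j) + (\<Sum>j\<in>{j\<in>J. r j \<in> B}. w j)"
    using \<open>finite J\<close> by (simp add: sum.union_disjoint)
qed (use assms in \<open>auto intro: sum_nonneg\<close>)

lemma dirac_sum_eq_sum_atoms:
  assumes "finite J" and "finite B"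
  shows "dirac_sum J r w B = (\<Sum>x\<in>B. dirac_sum J r w {x})"
proof -
  have "(\<Sum>x\<in>B. dirac_sum J r w {x}) = (\<Sum>x\<in>B. \<Sum>j\<in>{j\<in>{j\<in>J. r j \<in> B}. r j = x}. w j)"
    unfolding dirac_sum_def by (intro sum.cong arg_cong[where f = "sum w"]) auto
  also have "\<dots> = dirac_sum J r w B"
    unfolding dirac_sum_def using assms by (intro sum.group) auto
  finally show ?thesis by simp
qed

lemma dirac_sum_singleton_rep:
  assumes "inj_on r J" and "j \<in> J"
  shows "dirac_sum J r w {r j} = w j"
proof -
  have "{i\<in>J. r i \<in> {r j}} = {j}" using assms by (auto dest: inj_onD)
  then show ?thesis unfolding dirac_sum_def by simp
qed

lemma dirac_sum_singleton_nonrep: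
  assumes "x \<notin> r ` J"
  shows "dirac_sum J r w {x} = 0"
proof -
  have "{j\<in>J. r j \<in> {x}} = {}" using assms by auto
  then show ?thesis unfolding dirac_sum_def by (simp only: sum.empty)
qed

lemma dirac_sum_singleton_idem:
  assumes "inj_on r J" and "\<And>j. j \<in> J \<Longrightarrow> w j = 0 \<or> w j = 1"
  shows "dirac_sum J r w {x} * dirac_sum J r w {x} = dirac_sum J r w {x}"
proof (cases "x \<in> r ` J")
  case True
  then obtain j where "j \<in> J" and "x = r j" by blast
  then have "dirac_sum J r w {x} = w j" using dirac_sum_singleton_rep[OF assms(1)] by simp
  then show ?thesis using assms(2)[OF \<open>j \<in> J\<close>] by auto
qed (simp add: dirac_sum_singleton_nonrep)

lemma dirac_sum_preimage_retraction:
  assumes "\<And>j. j \<in> J \<Longrightarrow> r j \<in> X \<and> p (r j) = r j"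
  shows "dirac_sum J r w {x\<in>X. p x \<in> B} = dirac_sum J r w B"
proof -
  have "{j\<in>J. r j \<in> {x\<in>X. p x \<in> B}} = {j\<in>J. r j \<in> B}" using assms by auto
  then show ?thesis unfolding dirac_sum_def by simp
qed

lemma fin_add_nonneg_atomic_product:
  assumes "finite X" and "M \<subseteq> Pow (X \<times> X)" and "\<And>x. 0 \<le> \<mu> {x}"
  shows "fin_add_nonneg M (atomic_product \<mu>)"
  unfolding fin_add_nonneg_def atomic_product_def
proof (intro conjI ballI impI)
  have finite_M: "finite S" if "S \<in> M" for S
    using that assms(1,2) finite_subset[of S "X \<times> X"] by auto
  fix A B assume "A \<in> M" "B \<in> M" "A \<inter> B = {}"
  then show "(\<Sum>(x, y)\<in>A \<union> B. \<mu> {x} * \<mu> {y}) = (\<Sum>(x, y)\<in>A. \<mu> {x} * \<mu> {y}) + (\<Sum>(x, y)\<in>B. \<mu> {x} * \<mu> {y})"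
    by (simp add: sum.union_disjoint finite_M)
qed (use assms(3) in \<open>auto intro: sum_nonneg\<close>)

lemma atomic_product_Times: "atomic_product \<mu> (A \<times> B) = (\<Sum>x\<in>A. \<mu> {x}) * (\<Sum>y\<in>B. \<mu> {y})"
  unfolding atomic_product_def by (simp add: sum_product sum.cartesian_product)

lemma atomic_product_restrict_diagonal:
  assumes "finite X" and "B \<subseteq> X" and refl: "\<And>x. x \<in> B \<Longrightarrow> (x, x) \<in> G"
    and off_diagonal: "\<And>x y. (x, y) \<in> G \<Longrightarrow> x \<noteq> y \<Longrightarrow> \<mu> {x} * \<mu> {y} = 0"
    and idem: "\<And>x. \<mu> {x} * \<mu> {x} = \<mu> {x}"
  shows "atomic_product \<mu> ((B \<times> X) \<inter> G) = (\<Sum>x\<in>B. \<mu> {x})"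
proof -
  let ?diag = "(\<lambda>x. (x, x)) ` B"
  have "atomic_product \<mu> ((B \<times> X) \<inter> G) = (\<Sum>(x, y)\<in>?diag. \<mu> {x} * \<mu> {y})"
    unfolding atomic_product_def
  proof (rule sum.mono_neutral_right)
    show "finite ((B \<times> X) \<inter> G)" using assms(1,2) by (simp add: finite_subset)
    show "?diag \<subseteq> (B \<times> X) \<inter> G" using assms(2) refl by auto
    show "\<forall>p\<in>(B \<times> X) \<inter> G - ?diag. (case p of (x, y) \<Rightarrow> \<mu> {x} * \<mu> {y}) = 0"
    proof (clarify)
      fix x y assume "(x, y) \<in> G" "x \<in> B" "(x, y) \<notin> ?diag"
      then show "\<mu> {x} * \<mu> {y} = 0" by (intro off_diagonal) auto
    qed
  qed
  also have "\<dots> = (\<Sum>x\<in>B. \<mu> {x} * \<mu> {x})"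
    by (simp add: sum.reindex inj_on_def)
  finally show ?thesis using idem by simp
qed

locale represented_partition =
  fixes X :: "'a set" and J :: "'j set" and C :: "'j \<Rightarrow> 'a set" and r :: "'j \<Rightarrow> 'a"
  assumes cover: "(\<Union>j\<in>J. C j) = X"
    and disjoint: "\<And>i j. i \<in> J \<Longrightarrow> j \<in> J \<Longrightarrow> i \<noteq> j \<Longrightarrow> C i \<inter> C j = {}"
    and rep_in_class: "\<And>j. j \<in> J \<Longrightarrow> r j \<in> C j"
begin

definition same_class :: "('a \<times> 'a) set" where
  "same_class = (\<Union>j\<in>J. C j \<times> C j)"

lemma class_unique: "i \<in> J \<Longrightarrow> j \<in> J \<Longrightarrow> x \<in> C i \<Longrightarrow> x \<in> C j \<Longrightarrow> i = j"
  using disjoint by blast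

lemma rep_in_space: "j \<in> J \<Longrightarrow> r j \<in> X"
  using cover rep_in_class by blast

lemma inj_on_rep: "inj_on r J"
  by (rule inj_onI) (metis class_unique rep_in_class)

lemma finite_index: "finite X \<Longrightarrow> finite J"
  using inj_on_rep rep_in_space by (metis finite_imageD finite_subset image_subsetI)

lemma equiv_same_class: "equiv X same_class"
proof (rule equivI)
  show "same_class \<subseteq> X \<times> X" "refl_on X same_class" "sym same_class"
    using cover unfolding same_class_def refl_on_def sym_def by blast+
  show "trans same_class"
    unfolding same_class_def trans_def by (blast dest: class_unique)
qed

lemma same_class_comp: "same_class O same_class = same_class"
  using equiv_comp_eq[OF equiv_same_class] equiv_same_class
  by (simp add: equiv_def sym_conv_converse_eq)

lemma same_class_reps_eq:
  assumes "(x, y) \<in> same_class" and "x \<in> r ` J" and "y \<in> r ` J"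
  shows "x = y"
proof -
  obtain j where "j \<in> J" "x \<in> C j" "y \<in> C j"
    using assms(1) unfolding same_class_def by blast
  moreover obtain i k where "i \<in> J" "x = r i" "k \<in> J" "y = r k"
    using assms(2,3) by blast
  ultimately have "i = j" and "k = j"
    using class_unique rep_in_class by metis+
  then show ?thesis using \<open>x = r i\<close> \<open>y = r k\<close> by simp
qed

lemma dirac_sum_same_class_off_diagonal:
  assumes "(x, y) \<in> same_class" and "x \<noteq> y"
  shows "dirac_sum J r w {x} * dirac_sum J r w {y} = 0"
proof (cases "x \<in> r ` J")
  case True
  then have "y \<notin> r ` J" using assms same_class_reps_eq by blast
  then show ?thesis by (simp add: dirac_sum_singleton_nonrep)
qed (simp add: dirac_sum_singleton_nonrep)

lemma atomic_product_same_class_slice: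
  assumes "finite X" and "B \<subseteq> X" and w01: "\<And>j. j \<in> J \<Longrightarrow> w j = 0 \<or> w j = 1"
  shows "atomic_product (dirac_sum J r w) ((B \<times> X) \<inter> same_class) = dirac_sum J r w B"
proof -
  have "x \<in> B \<Longrightarrow> (x, x) \<in> same_class" for x
    using equiv_same_class \<open>B \<subseteq> X\<close> by (auto simp: equiv_def refl_on_def)
  moreover have "dirac_sum J r w {x} * dirac_sum J r w {x} = dirac_sum J r w {x}" for x
    using inj_on_rep w01 by (rule dirac_sum_singleton_idem)
  ultimately have "atomic_product (dirac_sum J r w) ((B \<times> X) \<inter> same_class) =
      (\<Sum>x\<in>B. dirac_sum J r w {x})"
    using assms(1,2) dirac_sum_same_class_off_diagonal
    by (intro atomic_product_restrict_diagonal[where \<mu> = "dirac_sum J r w"])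
  also have "\<dots> = dirac_sum J r w B"
    using assms(1,2) finite_index finite_subset by (metis dirac_sum_eq_sum_atoms)
  finally show ?thesis .
qed

lemma atomic_product_dirac_sum_Times:
  assumes "finite X" and "B1 \<subseteq> X" and "B2 \<subseteq> X"
  shows "atomic_product (dirac_sum J r w) (B1 \<times> B2) = dirac_sum J r w B1 * dirac_sum J r w B2"
proof -
  have "finite J" using assms(1) by (rule finite_index)
  moreover have "finite B1" and "finite B2"
    using finite_subset assms by blast+
  ultimately show ?thesis
    by (simp add: atomic_product_Times dirac_sum_eq_sum_atoms[of J B1] dirac_sum_eq_sum_atoms[of J B2])
qed

context
  fixes p :: "'a \<Rightarrow> 'a"
  assumes proj: "\<And>x j. x \<in> X \<Longrightarrow> j \<in> J \<Longrightarrow> x \<in> C j \<Longrightarrow> p x = r j"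
begin

lemma proj_rep: "j \<in> J \<Longrightarrow> p (r j) = r j"
  using proj rep_in_space rep_in_class by blast

lemma proj_in_reps: "x \<in> X \<Longrightarrow> p x \<in> r ` J"
  using proj cover by blast

lemma proj_idem:
  assumes "x \<in> X"
  shows "p (p x) = p x"
proof -
  obtain j where "j \<in> J" and "p x = r j" using proj_in_reps[OF assms] by blast
  then show ?thesis using proj_rep by simp
qed

lemma admissible_dirac_model:
  assumes "finite X" and "X \<noteq> {}"
    and w01: "\<And>j. j \<in> J \<Longrightarrow> w j = 0 \<or> w j = 1" and w_pos: "(\<Sum>j\<in>J. w j) > 0"
    and \<mu>_def: "\<mu> \<equiv> dirac_sum J r w"
  shows "admissible_structural_model X (Pow X) \<mu> (atomic_product \<mu>) (r ` J) (X - r ` J)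
           p same_class (\<mu> X) 0"
proof -
  have w_nonneg: "0 \<le> w j" if "j \<in> J" for j
    using w01[OF that] by auto
  then have \<mu>_nonneg: "0 \<le> \<mu> B" for B
    unfolding \<mu>_def dirac_sum_def by (intro sum_nonneg) simp
  have \<mu>_add: "fin_add_nonneg (Pow X) \<mu>"
    unfolding \<mu>_def using finite_index[OF \<open>finite X\<close>] w_nonneg by (rule fin_add_nonneg_dirac_sum)
  have "{j\<in>J. r j \<in> X} = J" using rep_in_space by blast
  then have \<mu>_pos: "\<mu> X > 0" using w_pos by (simp add: \<mu>_def dirac_sum_def)
  have "r ` J \<subseteq> X" using rep_in_space by blast
  have "\<mu> (A \<union> B) = \<mu> A + \<mu> B" if "A \<subseteq> X" "B \<subseteq> X" "A \<inter> B = {}" for A B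
    using \<mu>_add that by (simp add: fin_add_nonneg_def)
  from this[of "r ` J" "X - r ` J"] have \<mu>_split: "\<mu> (r ` J) + \<mu> (X - r ` J) = \<mu> X"
    using \<open>r ` J \<subseteq> X\<close> by (simp add: Un_absorb1)
  have rectangles: "\<forall>B1\<in>Pow X. \<forall>B2\<in>Pow X. atomic_product \<mu> (B1 \<times> B2) = \<mu> B1 * \<mu> B2"
    unfolding \<mu>_def using atomic_product_dirac_sum_Times[OF \<open>finite X\<close>] by simp
  have atomic_product_add: "fin_add_nonneg (Pow (X \<times> X)) (atomic_product \<mu>)"
    using \<open>finite X\<close> _ \<mu>_nonneg by (rule fin_add_nonneg_atomic_product) simp
  have p_onto_reps: "\<forall>x\<in>X. p x \<in> r ` J" using proj_in_reps by blast
  have p_fixes_reps: "\<forall>x\<in>r ` J. p x = x" using proj_rep by blast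
  have p_idem: "\<forall>x\<in>X. p (p x) = p x" using proj_idem by blast
  have "dirac_sum J r w {x\<in>X. p x \<in> B} = dirac_sum J r w B" for B
    using rep_in_space proj_rep by (intro dirac_sum_preimage_retraction) simp
  then have \<mu>_preimage: "\<forall>B\<in>Pow X. B \<subseteq> r ` J \<longrightarrow> \<mu> {x\<in>X. p x \<in> B} = \<mu> B"
    by (simp add: \<mu>_def)
  have "same_class \<in> Pow (X \<times> X)" and refl: "refl_on X same_class" and sym: "sym same_class"
    using equiv_same_class by (simp_all add: equiv_def)
  have axiom_III: "\<forall>B\<in>Pow X. atomic_product \<mu> ((B \<times> X) \<inter> same_class) =
      \<mu> B + 0 * atomic_product \<mu> (({x\<in>X. p x \<in> B} \<times> X) \<inter> same_class)"
    unfolding \<mu>_def using atomic_product_same_class_slice[OF \<open>finite X\<close> _ w01] by simp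
  show ?thesis
    unfolding admissible_structural_model_def prod_algebra_Pow_finite[OF \<open>finite X\<close>]
    by (intro conjI; (fact | simp add: algebra_Pow same_class_comp \<open>r ` J \<subseteq> X\<close>))
qed

end

end

theorem proposition5p10:
  fixes X :: "'a set" and J :: "'j set" and C :: "'j \<Rightarrow> 'a set"
    and r :: "'j \<Rightarrow> 'a" and w :: "'j \<Rightarrow> real"
    and \<mu> :: "'a set \<Rightarrow> real" and \<mu>2 :: "('a \<times> 'a) set \<Rightarrow> real"
    and PiR :: "'a \<Rightarrow> 'a" and R I :: "'a set" and G :: "('a \<times> 'a) set"
  assumes fin: "finite X" and ne: "X \<noteq> {}"
    and part_ne: "\<forall>j\<in>J. C j \<noteq> {}"
    and part_disj: "\<forall>i\<in>J. \<forall>j\<in>J. i \<noteq> j \<longrightarrow> C i \<inter> C j = {}"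
    and part_cover: "(\<Union>j\<in>J. C j) = X"
    and rep: "\<forall>j\<in>J. r j \<in> C j"
    and R_def: "R = r ` J"
    and I_def: "I = X - R"
    and w01: "\<forall>j\<in>J. w j = 0 \<or> w j = 1"
    and wpos: "(\<Sum>j\<in>J. w j) > 0"
    and mu_def: "\<forall>B. \<mu> B = (\<Sum>j\<in>{j\<in>J. r j \<in> B}. w j)"
    and Pi_def: "\<forall>x\<in>X. \<forall>j\<in>J. x \<in> C j \<longrightarrow> PiR x = r j"
    and G_def: "G = (\<Union>j\<in>J. C j \<times> C j)"
    and mu2_def: "\<forall>S. \<mu>2 S = (\<Sum>(x, y)\<in>S. \<mu> {x} * \<mu> {y})"
  shows "admissible_structural_model X (Pow X) \<mu> \<mu>2 R I PiR G (\<mu> X) 0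
         \<and> ((\<exists>j\<in>J. \<exists>x\<in>C j. \<exists>y\<in>C j. x \<noteq> y) \<longrightarrow> \<not> G \<subseteq> Id)"
proof
  interpret represented_partition X J C r
    using part_disj part_cover rep by unfold_locales blast+
  have "\<mu> = dirac_sum J r w" using mu_def by (auto simp: dirac_sum_def)
  moreover have "\<mu>2 = atomic_product \<mu>" using mu2_def by (auto simp: atomic_product_def)
  moreover have "G = same_class" by (simp add: G_def same_class_def)
  ultimately show "admissible_structural_model X (Pow X) \<mu> \<mu>2 R I PiR G (\<mu> X) 0"
    using admissible_dirac_model[of PiR, OF _ fin ne _ wpos] w01 Pi_def R_def I_def by simp
  show "(\<exists>j\<in>J. \<exists>x\<in>C j. \<exists>y\<in>C j. x \<noteq> y) \<longrightarrow> \<not> G \<subseteq> Id"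
    using G_def by blast
qed

end
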